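(* Let $\phi$ be a proper partial $q$-edge-coloring of a graph $G$, let $xy$ be an uncolored edge, $C\subseteq[q]$, and $\ell\in\mathbb{N}$. Run $\mathsf{VizingChain}(\phi,xy,x,C,\ell)$ and suppose it returns $((F,P),\alpha)$ (not $\mathsf{FAIL}$), where $F=(x,y_0=y,\dots,y_{k-1})$ and $P=(x_0=x,\dots,x_s)$ is an $\alpha\beta$-path. If $s\ge1$, let $j$ be such that $y_j=x_1$. Then one of the following holds: (1) $P=(x)$ and the edge $xy_{k-1}$ is $\psi$-happy, where $\psi$ is obtained from $\phi$ by shifting $F$; or (2) $\mathsf{length}(P)<\ell$ and the edge $xy_{j-1}$ is $\psi$-happy, where $\psi$ is obtained from $\phi$ by flipping $P$ and then shifting $F'=(x,y_0,\dots,y_{j-1})$; or (3) $\mathsf{length}(P)<\ell$ and the edge $xy_{k-1}$ is $\psi$-happy, where $\psi$ is obtained from $\phi$ by flipping $P$ and then shifting $F$; or (4) $\mathsf{length}(P)=\ell$. Moreover, in cases (1)–(3) the happy edge may be colored with $\alpha$ (i.e. $\alpha$ is missing at both its endpoints under $\psi$).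
   Context: Let $G=(V,E)$ be a simple graph and $q\in\mathbb{N}$. A partial $q$-edge-coloring is a map $\phi:E\to[q]\cup\{\mathsf{blank}\}$ ($\mathsf{blank}$ = uncolored); it is proper if any two distinct colored edges sharing an endpoint get different colors. For $x\in V$, $M(\phi,x):=[q]\setminus\{\phi(xy): y\in N_G(x)\}$ is the set of colors missing at $x$. An uncolored edge $xy$ is $\phi$-happy if $M(\phi,x)\cap M(\phi,y)\ne\varnothing$. A fan under $\phi$ is a sequence $F=(x,y_0,\dots,y_{k-1})$ of distinct neighbors $y_i$ of $x$ with $\phi(xy_0)=\mathsf{blank}$ and $\phi(xy_i)\in M(\phi,y_{i-1})$ for $1\le i<k$; $\mathsf{length}(F)=k$. Shifting $F$ produces the coloring $\psi$ with $\psi(xy_i)=\phi(xy_{i+1})$ for $0\le i<k-1$, $\psi(xy_{k-1})=\mathsf{blank}$, and $\psi=\phi$ elsewhere. For $\alpha,\beta\in[q]$, an $\alpha\beta$-path under $\phi$ is a sequence $P=(x_0,\dots,x_s)$ of distinct vertices with $\phi(x_0x_1)=\alpha$ and the colors of $x_ix_{i+1}$ alternating $\alpha,\beta,\alpha,\dots$; $\mathsf{length}(P)=s$, $\mathsf{vEnd}(P)=x_s$. The path $(x_0)$ has length $0$. It is maximal if it cannot be extended at either end. Flipping $P$ interchanges the colors $\alpha$ and $\beta$ on the edges of $P$. Procedure $\mathsf{MakeFan}(\phi,xy,x,C)$: set $F\gets(x,y)$, $z\gets y$, $k\gets 1$ (and write $y_0=y$). Repeat: if $C\cap M(\phi,z)=\varnothing$,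 return $\mathsf{FAIL}$. Let $\eta\gets\min (M(\phi,z)\cap C)$. Set $z\gets$ the neighbor $w$ of $x$ with $\phi(xw)=\eta$, or $z\gets\mathsf{blank}$ if no such $w$ exists. If $z=\mathsf{blank}$, return $(F,\eta,k)$. If $z=y_j$ for some vertex $y_j$ of $F$ other than $x$, return $(F,\eta,j)$. Otherwise set $y_k\gets z$, append $y_k$ to $F$, and $k\gets k+1$. Procedure $\mathsf{VizingChain}(\phi,xy,x,C,\ell)$: run $\mathsf{MakeFan}(\phi,xy,x,C)$; if it returns $\mathsf{FAIL}$, return $\mathsf{FAIL}$. Otherwise let $(F,\alpha,j)$ be its output. If $j=\mathsf{length}(F)$, return $((F,(x)),\alpha)$. If $M(\phi,x)\cap C=\varnothing$, return $\mathsf{FAIL}$. Otherwise let $\beta\gets\min(M(\phi,x)\cap C)$, let $P$ be the maximal $\alpha\beta$-path starting at $x$ if its length is at most $\ell$, and otherwise the initial segment of it consisting of its first $\ell$ edges; return $((F,P),\alpha)$. *)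

theory Defs
  imports Main
begin

type_synonym 'v coloring = "'v set \<Rightarrow> nat option"
  (* an edge xy is the doubleton {x,y}; None = blank *)

definition simple_graph :: "'v set \<Rightarrow> ('v \<Rightarrow> 'v \<Rightarrow> bool) \<Rightarrow> bool" where
  "simple_graph V E \<longleftrightarrow> finite V \<and> (\<forall>x y. E x y \<longrightarrow> x \<in> V \<and> y \<in> V \<and> E y x \<and> x \<noteq> y)"

definition partial_coloring :: "('v \<Rightarrow> 'v \<Rightarrow> bool) \<Rightarrow> nat \<Rightarrow> 'v coloring \<Rightarrow> bool" where
  "partial_coloring E q \<phi> \<longleftrightarrow>
     (\<forall>e c. \<phi> e = Some c \<longrightarrow> c \<in> {1..q} \<and> (\<exists>x y. e = {x, y} \<and> E x y))"

definition proper :: "('v \<Rightarrow> 'v \<Rightarrow> bool) \<Rightarrow> 'v coloring \<Rightarrow> bool" where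
  "proper E \<phi> \<longleftrightarrow> (\<forall>x y z. E x y \<and> E x z \<and> y \<noteq> z \<and> \<phi> {x, y} \<noteq> None
       \<longrightarrow> \<phi> {x, y} \<noteq> \<phi> {x, z})"

definition missing :: "nat \<Rightarrow> ('v \<Rightarrow> 'v \<Rightarrow> bool) \<Rightarrow> 'v coloring \<Rightarrow> 'v \<Rightarrow> nat set" where
  "missing q E \<phi> x = {1..q} - {c. \<exists>y. E x y \<and> \<phi> {x, y} = Some c}"

definition happy :: "nat \<Rightarrow> ('v \<Rightarrow> 'v \<Rightarrow> bool) \<Rightarrow> 'v coloring \<Rightarrow> 'v \<Rightarrow> 'v \<Rightarrow> bool" where
  "happy q E \<phi> x y \<longleftrightarrow> E x y \<and> \<phi> {x, y} = None \<and> missing q E \<phi> x \<inter> missing q E \<phi> y \<noteq> {}"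

text \<open>Shifting the fan (x, ys!0, ..., ys!(k-1)); fans are lists of distinct vertices.\<close>
fun shift_fan :: "'v coloring \<Rightarrow> 'v \<Rightarrow> 'v list \<Rightarrow> 'v coloring" where
  "shift_fan \<phi> x [] = \<phi>"
| "shift_fan \<phi> x [y] = \<phi>({x, y} := None)"
| "shift_fan \<phi> x (y # z # zs) = (shift_fan \<phi> x (z # zs))({x, y} := \<phi> {x, z})"

definition path_edges :: "'v list \<Rightarrow> 'v set set" where
  "path_edges P = {{P ! i, P ! Suc i} | i. Suc i < length P}"

definition swap_col :: "nat \<Rightarrow> nat \<Rightarrow> nat option \<Rightarrow> nat option" where
  "swap_col a b c = (if c = Some a then Some b else if c = Some b then Some a else c)"

definition flip_path :: "'v coloring \<Rightarrow> nat \<Rightarrow> nat \<Rightarrow> 'v list \<Rightarrow> 'v coloring" where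
  "flip_path \<phi> a b P = (\<lambda>e. if e \<in> path_edges P then swap_col a b (\<phi> e) else \<phi> e)"

text \<open>The alternating a b walk from v, following at most n edges (first edge colored a).
  Under a proper coloring with b missing at v it is the maximal ab-path from v,
  truncated to its first n edges.\<close>
fun ab_walk :: "nat \<Rightarrow> ('v \<Rightarrow> 'v \<Rightarrow> bool) \<Rightarrow> 'v coloring \<Rightarrow> nat \<Rightarrow> nat \<Rightarrow> 'v \<Rightarrow> 'v list" where
  "ab_walk 0 E \<phi> a b v = [v]"
| "ab_walk (Suc n) E \<phi> a b v =
     (if \<exists>w. E v w \<and> \<phi> {v, w} = Some a
      then v # ab_walk n E \<phi> b a (THE w. E v w \<and> \<phi> {v, w} = Some a)
      else [v])"

text \<open>MakeFan, with a fuel argument; F is the list [y_0,...,y_{k-1}], z the current vertex.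
  Result: Some (F, eta, j) or None = FAIL.\<close>
fun makefan_aux :: "nat \<Rightarrow> nat \<Rightarrow> ('v \<Rightarrow> 'v \<Rightarrow> bool) \<Rightarrow> 'v coloring \<Rightarrow> 'v \<Rightarrow> nat set
     \<Rightarrow> 'v list \<Rightarrow> 'v \<Rightarrow> ('v list \<times> nat \<times> nat) option" where
  "makefan_aux 0 q E \<phi> x C F z = None"
| "makefan_aux (Suc n) q E \<phi> x C F z =
     (if C \<inter> missing q E \<phi> z = {} then None
      else let \<eta> = Min (missing q E \<phi> z \<inter> C) in
        if \<not> (\<exists>w. E x w \<and> \<phi> {x, w} = Some \<eta>) then Some (F, \<eta>, length F)
        else let w = (THE w. E x w \<and> \<phi> {x, w} = Some \<eta>) in
          if w \<in> set F then Some (F, \<eta>, LEAST i. i < length F \<and> F ! i = w)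
          else makefan_aux n q E \<phi> x C (F @ [w]) w)"

text \<open>Fuel q+1 suffices for proper colorings: each appended vertex has a distinct color in [q].\<close>
definition make_fan :: "nat \<Rightarrow> ('v \<Rightarrow> 'v \<Rightarrow> bool) \<Rightarrow> 'v coloring \<Rightarrow> 'v \<Rightarrow> 'v \<Rightarrow> nat set
     \<Rightarrow> ('v list \<times> nat \<times> nat) option" where
  "make_fan q E \<phi> x y C = makefan_aux (Suc q) q E \<phi> x C [y] y"

definition vizing_chain :: "nat \<Rightarrow> ('v \<Rightarrow> 'v \<Rightarrow> bool) \<Rightarrow> 'v coloring \<Rightarrow> 'v \<Rightarrow> 'v \<Rightarrow> nat set
     \<Rightarrow> nat \<Rightarrow> (('v list \<times> 'v list) \<times> nat) option" where
  "vizing_chain q E \<phi> x y C l =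
     (case make_fan q E \<phi> x y C of
        None \<Rightarrow> None
      | Some (F, \<alpha>, j) \<Rightarrow>
          if j = length F then Some ((F, [x]), \<alpha>)
          else if missing q E \<phi> x \<inter> C = {} then None
          else let \<beta> = Min (missing q E \<phi> x \<inter> C) in
            Some ((F, ab_walk l E \<phi> \<alpha> \<beta> x), \<alpha>))"

end

theory Submission
  imports Defs
begin

text \<open>
  If MakeFan stops because its colour \<alpha> is missing at x, then \<alpha> is missing at both ends of
  the last fan edge, and shifting the fan only permutes colours of edges at x, so \<alpha> stays
  missing there. Otherwise \<alpha> is the colour of an edge x y_j, and flipping the \<alpha>\<beta>-path P
  from x makes \<alpha> missing at x. The colour of x y_j is missing at y_(j-1), and the stopping
  colour \<alpha> is missing at y_(k-1); a vertex other than x that misses \<alpha> can lie on P only as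
  its last vertex, so P avoids one of y_(j-1) and y_(k-1), which therefore still misses \<alpha>
  after the flip. Shifting the fan up to that vertex leaves an uncoloured edge whose two ends
  both miss \<alpha>.
\<close>

definition happy_with :: "nat \<Rightarrow> ('v \<Rightarrow> 'v \<Rightarrow> bool) \<Rightarrow> 'v coloring \<Rightarrow> nat \<Rightarrow> 'v \<Rightarrow> 'v \<Rightarrow> bool" where
  "happy_with q E \<phi> a x y \<longleftrightarrow>
     happy q E \<phi> x y \<and> a \<in> missing q E \<phi> x \<and> a \<in> missing q E \<phi> y"

lemma mem_missing_iff:
  "c \<in> missing q E \<phi> v \<longleftrightarrow> c \<in> {1..q} \<and> \<not> (\<exists>w. E v w \<and> \<phi> {v, w} = Some c)"
  unfolding missing_def by auto

lemma finite_missing: "finite (missing q E \<phi> v)"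
  unfolding missing_def by auto

lemma Min_missing_in:
  "missing q E \<phi> v \<inter> C \<noteq> {} \<Longrightarrow> Min (missing q E \<phi> v \<inter> C) \<in> missing q E \<phi> v \<inter> C"
  by (intro Min_in) (simp_all add: finite_missing)

lemma proper_colored_neighbor_unique:
  assumes "proper E \<phi>" "E v w" "\<phi> {v, w} = Some a" "E v w'" "\<phi> {v, w'} = Some a"
  shows "w' = w"
  using assms unfolding proper_def by (metis option.distinct(1))

lemma the_colored_neighbor:
  assumes "proper E \<phi>" "E v w" "\<phi> {v, w} = Some a"
  shows "(THE w. E v w \<and> \<phi> {v, w} = Some a) = w"
  using assms proper_colored_neighbor_unique[OF assms] by (intro the_equality) blast+

lemma shift_fan_outside: "(\<forall>g\<in>set G. e \<noteq> {x, g}) \<Longrightarrow> shift_fan \<phi> x G e = \<phi> e"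
  by (induction \<phi> x G rule: shift_fan.induct) auto

lemma shift_fan_SomeD:
  "shift_fan \<phi> x G e = Some c \<Longrightarrow> \<phi> e = Some c \<or> (\<exists>g\<in>set G. \<phi> {x, g} = Some c)"
  by (induction \<phi> x G rule: shift_fan.induct) (auto split: if_splits)

lemma shift_fan_last: "distinct G \<Longrightarrow> G \<noteq> [] \<Longrightarrow> shift_fan \<phi> x G {x, last G} = None"
proof (induction \<phi> x G rule: shift_fan.induct)
  case (3 \<phi> x y z zs)
  then have "{x, y} \<noteq> {x, last (z # zs)}"
    using last_in_set[of "z # zs"] by (auto simp: doubleton_eq_iff)
  with 3 show ?case by simp
qed auto

lemma missing_shift_fan_center:
  "\<forall>g\<in>set G. E x g \<Longrightarrow> c \<in> missing q E \<phi> x \<Longrightarrow> c \<in> missing q E (shift_fan \<phi> x G) x"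
  using shift_fan_SomeD unfolding mem_missing_iff by metis

lemma missing_shift_fan_last:
  assumes "distinct G" "G \<noteq> []" "x \<noteq> last G" "c \<in> missing q E \<phi> (last G)"
  shows "c \<in> missing q E (shift_fan \<phi> x G) (last G)"
  unfolding mem_missing_iff
proof (intro conjI notI)
  show "c \<in> {1..q}" using assms(4) by (simp add: mem_missing_iff)
  assume "\<exists>w. E (last G) w \<and> shift_fan \<phi> x G {last G, w} = Some c"
  then obtain w where w: "E (last G) w" "shift_fan \<phi> x G {last G, w} = Some c" by blast
  show False
  proof (cases "w = x")
    case True
    with w shift_fan_last[OF assms(1,2)] show False by (simp add: insert_commute)
  next
    case False
    with assms(3) have "\<forall>g\<in>set G. {last G, w} \<noteq> {x, g}" by (auto simp: doubleton_eq_iff)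
    with w have "\<phi> {last G, w} = Some c" using shift_fan_outside by metis
    with w assms(4) show False by (auto simp: mem_missing_iff)
  qed
qed

lemma happy_with_shift_fan:
  assumes "distinct G" "G \<noteq> []" "\<forall>g\<in>set G. E x g" "x \<notin> set G"
    and "a \<in> missing q E \<phi> x" "a \<in> missing q E \<phi> (last G)"
  shows "happy_with q E (shift_fan \<phi> x G) a x (last G)"
proof -
  have "last G \<in> set G" using assms(2) by simp
  with assms(3,4) have "E x (last G)" "x \<noteq> last G" by auto
  moreover have "a \<in> missing q E (shift_fan \<phi> x G) x"
    using missing_shift_fan_center[OF assms(3,5)] .
  moreover have "a \<in> missing q E (shift_fan \<phi> x G) (last G)"
    using missing_shift_fan_last[OF assms(1,2) \<open>x \<noteq> last G\<close> assms(6)] .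
  ultimately show ?thesis
    using shift_fan_last[OF assms(1,2)] unfolding happy_with_def happy_def by blast
qed

definition alternating :: "('v \<Rightarrow> 'v \<Rightarrow> bool) \<Rightarrow> 'v coloring \<Rightarrow> nat \<Rightarrow> nat \<Rightarrow> 'v list \<Rightarrow> bool" where
  "alternating E \<phi> a b P \<longleftrightarrow>
     (\<forall>i. Suc i < length P \<longrightarrow>
        E (P ! i) (P ! Suc i) \<and> \<phi> {P ! i, P ! Suc i} = Some (if even i then a else b))"

lemma alternating_Cons:
  "alternating E \<phi> a b (v # w # P) \<longleftrightarrow>
     E v w \<and> \<phi> {v, w} = Some a \<and> alternating E \<phi> b a (w # P)" (is "?L \<longleftrightarrow> ?R")
proof
  assume L: ?L
  note L' = L[unfolded alternating_def, rule_format]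
  have "alternating E \<phi> b a (w # P)" unfolding alternating_def
  proof (intro allI impI)
    fix i assume "Suc i < length (w # P)"
    then show "E ((w # P) ! i) ((w # P) ! Suc i) \<and>
        \<phi> {(w # P) ! i, (w # P) ! Suc i} = Some (if even i then b else a)"
      using L'[of "Suc i"] by simp
  qed
  with L'[of 0] show ?R by simp
next
  assume R: ?R
  show ?L unfolding alternating_def
  proof (intro allI impI)
    fix i assume "Suc i < length (v # w # P)"
    with R show "E ((v # w # P) ! i) ((v # w # P) ! Suc i) \<and>
        \<phi> {(v # w # P) ! i, (v # w # P) ! Suc i} = Some (if even i then a else b)"
      by (cases i) (auto simp: alternating_def)
  qed
qed

lemma ab_walk_Cons_colored:
  assumes "proper E \<phi>" "E v w" "\<phi> {v, w} = Some a"
  shows "ab_walk (Suc n) E \<phi> a b v = v # ab_walk n E \<phi> b a w"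
  using assms the_colored_neighbor[OF assms] by auto

lemma ab_walk_ConsE:
  obtains R where "ab_walk n E \<phi> a b v = v # R"
proof -
  have "\<exists>R. ab_walk n E \<phi> a b v = v # R" by (cases n) auto
  with that show thesis by blast
qed

lemma ab_walk_colored_ConsE:
  assumes "proper E \<phi>" "E v w" "\<phi> {v, w} = Some a" "0 < n"
  obtains R where "ab_walk n E \<phi> a b v = v # w # R"
proof -
  obtain R where "ab_walk (n - 1) E \<phi> b a w = w # R" by (rule ab_walk_ConsE)
  with ab_walk_Cons_colored[OF assms(1-3), of "n - 1" b] assms(4) that show thesis by simp
qed

lemma length_ab_walk: "length (ab_walk n E \<phi> a b v) \<le> Suc n"
  by (induction n arbitrary: a b v) auto

lemma alternating_ab_walk:
  assumes "proper E \<phi>"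
  shows "alternating E \<phi> a b (ab_walk n E \<phi> a b v)"
proof (induction n arbitrary: a b v)
  case (Suc n)
  show ?case
  proof (cases "\<exists>w. E v w \<and> \<phi> {v, w} = Some a")
    case True
    then obtain w where w: "E v w" "\<phi> {v, w} = Some a" by blast
    obtain R where R: "ab_walk n E \<phi> b a w = w # R" by (rule ab_walk_ConsE)
    show ?thesis
      using Suc.IH[of b a w] ab_walk_Cons_colored[OF assms w] w
      by (simp add: R alternating_Cons)
  qed (auto simp: alternating_def)
qed (simp add: alternating_def)

lemma alternating_missing_last:
  assumes sym: "\<And>u v. E u v \<Longrightarrow> E v u"
    and alt: "alternating E \<phi> a b P" and "v \<in> set P" "v \<noteq> P ! 0" and am: "a \<in> missing q E \<phi> v"
  shows "v = last P"
proof -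
  obtain i where i: "i < length P" "P ! i = v" using \<open>v \<in> set P\<close> by (metis in_set_conv_nth)
  with \<open>v \<noteq> P ! 0\<close> have "i \<noteq> 0" by metis
  have "\<not> Suc i < length P"
  proof
    assume si: "Suc i < length P"
    show False
    proof (cases "even i")
      case True
      with alt si i am show False by (auto simp: alternating_def mem_missing_iff)
    next
      case False
      with \<open>i \<noteq> 0\<close> have "even (i - 1)" "Suc (i - 1) = i" by auto
      then have "E (P ! (i - 1)) v \<and> \<phi> {P ! (i - 1), v} = Some a"
        using alt[unfolded alternating_def, rule_format, of "i - 1"] i by simp
      with sym have "E v (P ! (i - 1))" "\<phi> {v, P ! (i - 1)} = Some a"
        by (auto simp: insert_commute)
      with am show False unfolding mem_missing_iff by blast
    qed
  qed
  with i have "i = length P - 1" by simp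
  with i show ?thesis by (metis last_conv_nth list.size(3) not_less_zero)
qed

lemma missing_flip_path_outside:
  "v \<notin> set P \<Longrightarrow> missing q E (flip_path \<phi> a b P) v = missing q E \<phi> v"
  unfolding missing_def flip_path_def path_edges_def by (auto simp: doubleton_eq_iff)

lemma missing_flip_path_start:
  assumes "proper E \<phi>" and alt: "alternating E \<phi> a b P" and "P ! 0 = x" "1 < length P"
    and "b \<in> missing q E \<phi> x" "a \<noteq> b" "a \<in> {1..q}"
  shows "a \<in> missing q E (flip_path \<phi> a b P) x"
  unfolding mem_missing_iff
proof (intro conjI notI)
  show "a \<in> {1..q}" by fact
  assume "\<exists>w. E x w \<and> flip_path \<phi> a b P {x, w} = Some a"
  then obtain w where w: "E x w" "flip_path \<phi> a b P {x, w} = Some a" by blast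
  show False
  proof (cases "{x, w} \<in> path_edges P")
    case True
    then obtain i where i: "{x, w} = {P ! i, P ! Suc i}" "Suc i < length P"
      unfolding path_edges_def by blast
    with alt have "\<phi> {x, w} = Some (if even i then a else b)" by (simp add: alternating_def)
    with True w assms(5,6) show False
      by (cases "even i") (auto simp: flip_path_def swap_col_def mem_missing_iff)
  next
    case False
    with w have xw: "\<phi> {x, w} = Some a" by (simp add: flip_path_def)
    from alt assms(3,4) have "E x (P ! 1)" "\<phi> {x, P ! 1} = Some a"
      by (auto simp: alternating_def)
    with assms(1) w(1) xw have "{x, w} = {P ! 0, P ! Suc 0}"
      using proper_colored_neighbor_unique assms(3) by fastforce
    with False assms(4) show False by (auto simp: path_edges_def)
  qed
qed

definition is_fan :: "nat \<Rightarrow> ('v \<Rightarrow> 'v \<Rightarrow> bool) \<Rightarrow> 'v coloring \<Rightarrow> 'v \<Rightarrow> 'v list \<Rightarrow> bool" where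
  "is_fan q E \<phi> x F \<longleftrightarrow> F \<noteq> [] \<and> distinct F \<and> (\<forall>g\<in>set F. E x g) \<and> \<phi> {x, F ! 0} = None \<and>
     (\<forall>i. 0 < i \<and> i < length F \<longrightarrow>
        (\<exists>c. \<phi> {x, F ! i} = Some c \<and> c \<in> missing q E \<phi> (F ! (i - 1))))"

lemma is_fan_snoc:
  assumes "is_fan q E \<phi> x F" "w \<notin> set F" "E x w" "\<phi> {x, w} = Some c" "c \<in> missing q E \<phi> (last F)"
  shows "is_fan q E \<phi> x (F @ [w])"
proof -
  have "\<exists>c. \<phi> {x, (F @ [w]) ! i} = Some c \<and> c \<in> missing q E \<phi> ((F @ [w]) ! (i - 1))"
    if "0 < i" "i < length (F @ [w])" for i
  proof (cases "i < length F")
    case False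
    with that have "i = length F" by simp
    moreover have "F ! (length F - 1) = last F" using assms(1) by (simp add: is_fan_def last_conv_nth)
    ultimately show ?thesis using assms that by (simp add: nth_append)
  qed (use that assms in \<open>auto simp: is_fan_def nth_append\<close>)
  with assms show ?thesis by (auto simp: is_fan_def nth_append)
qed

lemma makefan_aux_SomeD:
  assumes "proper E \<phi>" "is_fan q E \<phi> x F" "z = last F"
    and "makefan_aux n q E \<phi> x C F z = Some (F', \<eta>, j)"
  shows "is_fan q E \<phi> x F' \<and> \<eta> \<in> C \<and> \<eta> \<in> missing q E \<phi> (last F') \<and>
    ((j = length F' \<and> \<eta> \<in> missing q E \<phi> x) \<or> (j < length F' \<and> \<phi> {x, F' ! j} = Some \<eta>))"
  using assms(2-4)
proof (induction n arbitrary: F z)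
  case (Suc n)
  then have ne: "C \<inter> missing q E \<phi> z \<noteq> {}" by (auto split: if_splits)
  define e where "e = Min (missing q E \<phi> z \<inter> C)"
  have e: "e \<in> missing q E \<phi> z" "e \<in> C"
    using Min_missing_in[of q E \<phi> z C] ne unfolding e_def by blast+
  have step: "makefan_aux (Suc n) q E \<phi> x C F z =
    (if \<not> (\<exists>w. E x w \<and> \<phi> {x, w} = Some e) then Some (F, e, length F)
     else let w = (THE w. E x w \<and> \<phi> {x, w} = Some e) in
       if w \<in> set F then Some (F, e, LEAST i. i < length F \<and> F ! i = w)
       else makefan_aux n q E \<phi> x C (F @ [w]) w)"
    by (simp only: makefan_aux.simps Let_def e_def ne if_False)
  show ?case
  proof (cases "\<exists>w. E x w \<and> \<phi> {x, w} = Some e")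
    case False
    with Suc.prems(3) step have "F' = F" "\<eta> = e" "j = length F" by auto
    with False Suc.prems(1,2) e show ?thesis by (auto simp: mem_missing_iff)
  next
    case True
    then obtain w where w: "E x w" "\<phi> {x, w} = Some e" by blast
    have found: "Some (F', \<eta>, j) =
      (if w \<in> set F then Some (F, e, LEAST i. i < length F \<and> F ! i = w)
       else makefan_aux n q E \<phi> x C (F @ [w]) w)"
      using Suc.prems(3) True unfolding step the_colored_neighbor[OF assms(1) w] by (simp add: Let_def)
    show ?thesis
    proof (cases "w \<in> set F")
      case True
      then have "\<exists>i. i < length F \<and> F ! i = w" by (metis in_set_conv_nth)
      from LeastI_ex[OF this] found True w Suc.prems(1,2) e show ?thesis by auto
    next
      case False
      with found have "makefan_aux n q E \<phi> x C (F @ [w]) w = Some (F', \<eta>, j)" by simp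
      moreover have "is_fan q E \<phi> x (F @ [w])"
        using is_fan_snoc[OF Suc.prems(1) False w] e Suc.prems(2) by simp
      ultimately show ?thesis using Suc.IH by simp
    qed
  qed
qed simp

lemma vizing_chain_SomeE:
  assumes "proper E \<phi>" "E x y" "\<phi> {x, y} = None"
    and "vizing_chain q E \<phi> x y C l = Some ((F, P), \<alpha>)"
  obtains (fan) "is_fan q E \<phi> x F" "\<alpha> \<in> missing q E \<phi> (last F)"
      "P = [x]" "\<alpha> \<in> missing q E \<phi> x"
    | (path) j where "is_fan q E \<phi> x F" "\<alpha> \<in> missing q E \<phi> (last F)"
      "0 < j" "j < length F" "\<phi> {x, F ! j} = Some \<alpha>"
      "Min (missing q E \<phi> x \<inter> C) \<in> missing q E \<phi> x"
      "P = ab_walk l E \<phi> \<alpha> (Min (missing q E \<phi> x \<inter> C)) x"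
proof -
  obtain F' \<eta> j where mf: "make_fan q E \<phi> x y C = Some (F', \<eta>, j)"
    using assms(4) unfolding vizing_chain_def by (auto split: option.splits)
  have "is_fan q E \<phi> x [y]" using assms(2,3) by (auto simp: is_fan_def)
  from makefan_aux_SomeD[OF assms(1) this _ mf[unfolded make_fan_def]]
  have mf_spec: "is_fan q E \<phi> x F'" "\<eta> \<in> missing q E \<phi> (last F')"
    "(j = length F' \<and> \<eta> \<in> missing q E \<phi> x) \<or> (j < length F' \<and> \<phi> {x, F' ! j} = Some \<eta>)"
    by auto
  have F: "F = F'" "\<alpha> = \<eta>"
    using assms(4) mf unfolding vizing_chain_def by (auto split: if_splits simp: Let_def)
  show thesis
  proof (cases "j = length F'")
    case True
    with assms(4) mf have "P = [x]" unfolding vizing_chain_def by simp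
    with True mf_spec F fan show thesis by auto
  next
    case False
    with assms(4) mf have "missing q E \<phi> x \<inter> C \<noteq> {}"
      and "P = ab_walk l E \<phi> \<alpha> (Min (missing q E \<phi> x \<inter> C)) x"
      unfolding vizing_chain_def by (auto simp: Let_def F split: if_splits)
    moreover have "0 < j" using False mf_spec by (cases j) (auto simp: is_fan_def)
    ultimately show thesis
      using False mf_spec F Min_missing_in[of q E \<phi> x C] by (intro path[of j]) auto
  qed
qed

lemma happy_with_flip_shift_fan:
  assumes sym: "\<And>u v. E u v \<Longrightarrow> E v u" and "proper E \<phi>"
    and fan: "is_fan q E \<phi> x F" "x \<notin> set F" and j: "0 < j" "j < length F"
    and xj: "\<phi> {x, F ! j} = Some a" and a_last: "a \<in> missing q E \<phi> (last F)"
    and alt: "alternating E \<phi> a b P" "P ! 0 = x" "1 < length P"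
    and b: "b \<in> missing q E \<phi> x"
  shows "happy_with q E (shift_fan (flip_path \<phi> a b P) x (take j F)) a x (F ! (j - 1))
       \<or> happy_with q E (shift_fan (flip_path \<phi> a b P) x F) a x (last F)"
proof -
  let ?\<phi>' = "flip_path \<phi> a b P"
  have F: "F \<noteq> []" "distinct F" "\<forall>g\<in>set F. E x g" using fan by (auto simp: is_fan_def)
  have "a \<noteq> b" using xj b F(3) j(2) by (auto simp: mem_missing_iff)
  moreover have "a \<in> {1..q}" using a_last by (simp add: mem_missing_iff)
  ultimately have a_x: "a \<in> missing q E ?\<phi>' x"
    using missing_flip_path_start[OF assms(2) alt] b by blast
  have a_prev: "a \<in> missing q E \<phi> (F ! (j - 1))"
    using fan j xj unfolding is_fan_def by fastforce
  have last_take: "last (take j F) = F ! (j - 1)"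
    using j by (cases j) (auto simp: take_Suc_conv_app_nth)
  show ?thesis
  proof (cases "F ! (j - 1) \<in> set P")
    case False
    then have "happy_with q E (shift_fan ?\<phi>' x (take j F)) a x (last (take j F))"
      using fan F j a_x a_prev last_take missing_flip_path_outside[OF False]
      by (intro happy_with_shift_fan) (auto dest: in_set_takeD)
    with last_take show ?thesis by simp
  next
    case True
    have "x \<noteq> F ! (j - 1)" "x \<noteq> last F" using fan F j by auto
    then have "F ! (j - 1) = last P"
      using alternating_missing_last[OF sym alt(1) True] a_prev alt(2) by simp
    moreover have "F ! (j - 1) \<noteq> last F"
      using F j by (simp add: last_conv_nth nth_eq_iff_index_eq)
    ultimately have "last F \<notin> set P"
      using alternating_missing_last[OF sym alt(1) _ _ a_last] alt(2) \<open>x \<noteq> last F\<close> by auto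
    then have "happy_with q E (shift_fan ?\<phi>' x F) a x (last F)"
      using F fan a_x a_last missing_flip_path_outside[OF \<open>last F \<notin> set P\<close>]
      by (intro happy_with_shift_fan) auto
    then show ?thesis by simp
  qed
qed

theorem lemma3p2:
  fixes V :: "'v set" and E :: "'v \<Rightarrow> 'v \<Rightarrow> bool" and \<phi> :: "'v coloring"
    and q l :: nat and C :: "nat set" and x y :: 'v
    and F P :: "'v list" and \<alpha> :: nat
  assumes "simple_graph V E"
    and "partial_coloring E q \<phi>" and "proper E \<phi>"
    and "E x y" and "\<phi> {x, y} = None"
    and "C \<subseteq> {1..q}"
    and "vizing_chain q E \<phi> x y C l = Some ((F, P), \<alpha>)"
  shows "let k = length F; s = length P - 1; \<beta> = Min (missing q E \<phi> x \<inter> C) in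
     (P = [x] \<and>
        (let \<psi> = shift_fan \<phi> x F in
           happy q E \<psi> x (F ! (k - 1)) \<and>
           \<alpha> \<in> missing q E \<psi> x \<and> \<alpha> \<in> missing q E \<psi> (F ! (k - 1))))
   \<or> (s < l \<and> (\<exists>j < k. F ! j = P ! 1 \<and>
        (let \<psi> = shift_fan (flip_path \<phi> \<alpha> \<beta> P) x (take j F) in
           happy q E \<psi> x (F ! (j - 1)) \<and>
           \<alpha> \<in> missing q E \<psi> x \<and> \<alpha> \<in> missing q E \<psi> (F ! (j - 1)))))
   \<or> (s < l \<and>
        (let \<psi> = shift_fan (flip_path \<phi> \<alpha> \<beta> P) x F in
           happy q E \<psi> x (F ! (k - 1)) \<and>
           \<alpha> \<in> missing q E \<psi> x \<and> \<alpha> \<in> missing q E \<psi> (F ! (k - 1))))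
   \<or> s = l"
proof -
  have sym: "\<And>u v. E u v \<Longrightarrow> E v u" and x_notin: "\<And>F. \<forall>g\<in>set F. E x g \<Longrightarrow> x \<notin> set F"
    using assms(1) unfolding simple_graph_def by blast+
  let ?\<beta> = "Min (missing q E \<phi> x \<inter> C)"
  from assms(3-5,7) show ?thesis
  proof (cases rule: vizing_chain_SomeE)
    case fan
    then have "happy_with q E (shift_fan \<phi> x F) \<alpha> x (last F)"
      using x_notin by (intro happy_with_shift_fan) (auto simp: is_fan_def)
    with fan show ?thesis by (simp add: happy_with_def last_conv_nth is_fan_def)
  next
    case (path j)
    show ?thesis
    proof (cases "length P - 1 < l")
      case True
      then have "0 < l" by simp
      moreover have "E x (F ! j)" using path(1,4) by (simp add: is_fan_def)
      ultimately obtain R where P: "P = x # F ! j # R"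
        using ab_walk_colored_ConsE[OF assms(3) _ path(5)] path(7) by metis
      have "alternating E \<phi> \<alpha> ?\<beta> P" using alternating_ab_walk[OF assms(3)] path by simp
      then have "happy_with q E (shift_fan (flip_path \<phi> \<alpha> ?\<beta> P) x (take j F)) \<alpha> x (F ! (j - 1))
          \<or> happy_with q E (shift_fan (flip_path \<phi> \<alpha> ?\<beta> P) x F) \<alpha> x (last F)"
        using path(1-6) x_notin
        by (intro happy_with_flip_shift_fan[OF sym assms(3)]) (auto simp: P is_fan_def)
      moreover have "F ! (length F - 1) = last F" using path(1) by (simp add: is_fan_def last_conv_nth)
      ultimately show ?thesis
        using True path(4) unfolding happy_with_def Let_def by (auto simp: P)
    next
      case False
      then have "length P - 1 = l"
        using path length_ab_walk[of l E \<phi> \<alpha> ?\<beta> x] by simp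
      then show ?thesis by simp
    qed
  qed
qed

end
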